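(* Let $R=\prod_{i=1}^n R_i$ be a finite product of commutative rings. Then $R$ is an avoidance ring if and only if each $R_i$ is an avoidance ring.
   Context: All rings are commutative with $1\neq 0$. An ideal $I$ of a ring $R$ has avoidance if whenever $I_1,\ldots,I_n$ are finitely many ideals of $R$ with $I\subseteq\bigcup_{k=1}^n I_k$, then $I\subseteq I_k$ for some $k$. A ring is an avoidance ring if every ideal of it has avoidance. *)

theory Defs
  imports "HOL-Algebra.Chinese_Remainder"
begin

definition has_avoidance :: "('a, 'b) ring_scheme \<Rightarrow> 'a set \<Rightarrow> bool" where
  "has_avoidance R I \<longleftrightarrow>
     (\<forall>S. finite S \<and> (\<forall>J\<in>S. ideal J R) \<and> I \<subseteq> \<Union>S \<longrightarrow> (\<exists>J\<in>S. I \<subseteq> J))"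

definition avoidance_ring :: "('a, 'b) ring_scheme \<Rightarrow> bool" where
  "avoidance_ring R \<longleftrightarrow> (\<forall>I. ideal I R \<longrightarrow> has_avoidance R I)"

end

theory Submission
  imports Defs
begin

text \<open>Avoidance passes to homomorphic images: a cover of an ideal of the image pulls back
along a surjective homomorphism to a cover of the preimage ideal. Applied to the projections,
this gives one direction. Conversely, the idempotents \<open>e\<^sub>i\<close> of the product show that an ideal
contains every element all of whose coordinates are coordinates of its elements. So if \<open>I\<close> is
covered by \<open>J\<^sub>1, \<dots>, J\<^sub>m\<close> but contained in none of them, assign to each \<open>J\<^sub>k\<close> a coordinate \<open>i\<close> where the
projection of \<open>I\<close> is not contained in that of \<open>J\<^sub>k\<close>; avoidance in the \<open>i\<close>-th factor yields a
coordinate of \<open>I\<close> outside all projections assigned to \<open>i\<close>, and assembling these coordinates gives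
an element of \<open>I\<close> that lies in no \<open>J\<^sub>k\<close>.\<close>

lemma (in ring_hom_ring) ideal_image_of_surj:
  assumes surj: "h ` carrier R = carrier S" and I: "ideal I R"
  shows "ideal (h ` I) S"
proof -
  interpret I: ideal I R by fact
  show ?thesis
  proof (rule idealI)
    show "subgroup (h ` I) (add_monoid S)"
      by (rule img_is_add_subgroup) (rule I.a_subgroup)
  next
    fix a x assume "a \<in> h ` I" and "x \<in> carrier S"
    then obtain b r where "b \<in> I" "a = h b" "r \<in> carrier R" "x = h r"
      using surj by blast
    then show "x \<otimes>\<^bsub>S\<^esub> a \<in> h ` I" "a \<otimes>\<^bsub>S\<^esub> x \<in> h ` I"
      by (metis I.I_l_closed I.Icarr hom_mult image_eqI, metis I.I_r_closed I.Icarr hom_mult image_eqI)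
  qed (rule S.ring_axioms)
qed

lemma (in ring_hom_ring) avoidance_ring_image_of_surj:
  assumes surj: "h ` carrier R = carrier S" and av: "avoidance_ring R"
  shows "avoidance_ring S"
  unfolding avoidance_ring_def has_avoidance_def
proof (intro allI impI, elim conjE)
  define pull where "pull K = {r \<in> carrier R. h r \<in> K}" for K
  fix K T assume K: "ideal K S" and T: "finite T" "\<forall>L\<in>T. ideal L S" "K \<subseteq> \<Union>T"
  have "has_avoidance R (pull K)"
    using av ideal_vimage[OF K] unfolding avoidance_ring_def pull_def by blast
  moreover have "\<forall>L\<in>pull ` T. ideal L R"
    using T(2) ideal_vimage unfolding pull_def by blast
  moreover have "pull K \<subseteq> \<Union>(pull ` T)"
    using T(3) unfolding pull_def by blast
  ultimately have "\<exists>L'\<in>pull ` T. pull K \<subseteq> L'"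
    using T(1) unfolding has_avoidance_def by blast
  then obtain L where L: "L \<in> T" "pull K \<subseteq> pull L" by blast
  have "K \<subseteq> L"
  proof
    fix k assume "k \<in> K"
    moreover obtain r where "r \<in> carrier R" "k = h r"
      using surj ideal.Icarr[OF K \<open>k \<in> K\<close>] by (metis imageE)
    ultimately show "k \<in> L" using L(2) unfolding pull_def by blast
  qed
  then show "\<exists>L\<in>T. K \<subseteq> L" using L(1) by blast
qed

lemma RDirProd_list_mult_nth:
  assumes "xs \<in> carrier (RDirProd_list Rs)" "ys \<in> carrier (RDirProd_list Rs)" "i < length Rs"
  shows "(xs \<otimes>\<^bsub>RDirProd_list Rs\<^esub> ys) ! i = xs ! i \<otimes>\<^bsub>Rs ! i\<^esub> ys ! i"
  using assms
proof (induction Rs arbitrary: xs ys i)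
  case (Cons R Rs)
  obtain a as b bs where "xs = a # as" "ys = b # bs" "a \<in> carrier R" "b \<in> carrier R"
    "as \<in> carrier (RDirProd_list Rs)" "bs \<in> carrier (RDirProd_list Rs)"
    using Cons.prems(1,2) unfolding RDirProd_list_carrier by force
  moreover have "(a # as) \<otimes>\<^bsub>RDirProd_list (R # Rs)\<^esub> (b # bs)
      = (a \<otimes>\<^bsub>R\<^esub> b) # (as \<otimes>\<^bsub>RDirProd_list Rs\<^esub> bs)" if "a \<in> carrier R" "b \<in> carrier R"
    "as \<in> carrier (RDirProd_list Rs)" "bs \<in> carrier (RDirProd_list Rs)" for a as b bs
    using ring_hom_mult[OF RDirProd_list_hom1[of R Rs], of "(a, as)" "(b, bs)"] that
    by (simp add: RDirProd_carrier RDirProd_def DirProd_def monoid.defs)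
  ultimately show ?case
    using Cons by (cases i) auto
qed simp

lemma RDirProd_list_add_nth:
  assumes "xs \<in> carrier (RDirProd_list Rs)" "ys \<in> carrier (RDirProd_list Rs)" "i < length Rs"
  shows "(xs \<oplus>\<^bsub>RDirProd_list Rs\<^esub> ys) ! i = xs ! i \<oplus>\<^bsub>Rs ! i\<^esub> ys ! i"
  using assms
proof (induction Rs arbitrary: xs ys i)
  case (Cons R Rs)
  obtain a as b bs where "xs = a # as" "ys = b # bs" "a \<in> carrier R" "b \<in> carrier R"
    "as \<in> carrier (RDirProd_list Rs)" "bs \<in> carrier (RDirProd_list Rs)"
    using Cons.prems(1,2) unfolding RDirProd_list_carrier by force
  moreover have "(a # as) \<oplus>\<^bsub>RDirProd_list (R # Rs)\<^esub> (b # bs)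
      = (a \<oplus>\<^bsub>R\<^esub> b) # (as \<oplus>\<^bsub>RDirProd_list Rs\<^esub> bs)" if "a \<in> carrier R" "b \<in> carrier R"
    "as \<in> carrier (RDirProd_list Rs)" "bs \<in> carrier (RDirProd_list Rs)" for a as b bs
    using ring_hom_add[OF RDirProd_list_hom1[of R Rs], of "(a, as)" "(b, bs)"] that
    by (simp add: RDirProd_carrier RDirProd_def DirProd_def monoid.defs)
  ultimately show ?case
    using Cons by (cases i) auto
qed simp

lemma RDirProd_list_one_nth:
  assumes "i < length Rs"
  shows "\<one>\<^bsub>RDirProd_list Rs\<^esub> ! i = \<one>\<^bsub>Rs ! i\<^esub>"
proof -
  have "foldr (\<lambda>R tl. \<one>\<^bsub>R\<^esub> # tl) Rs [] = map one Rs"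
    by (induction Rs) auto
  then show ?thesis
    using assms by (simp add: RDirProd_list_one)
qed

lemma RDirProd_list_zero_nth:
  assumes "i < length Rs"
  shows "\<zero>\<^bsub>RDirProd_list Rs\<^esub> ! i = \<zero>\<^bsub>Rs ! i\<^esub>"
proof -
  have "foldr (\<lambda>R tl. \<zero>\<^bsub>R\<^esub> # tl) Rs [] = map zero Rs"
    by (induction Rs) auto
  then show ?thesis
    using assms by (simp add: RDirProd_list_zero)
qed

lemma RDirProd_list_nth_ring_hom_ring:
  assumes "\<And>j. j < length Rs \<Longrightarrow> ring (Rs ! j)" and "i < length Rs"
  shows "ring_hom_ring (RDirProd_list Rs) (Rs ! i) (\<lambda>xs. xs ! i)"
proof (rule ring_hom_ringI2)
  show "(\<lambda>xs. xs ! i) \<in> ring_hom (RDirProd_list Rs) (Rs ! i)"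
    using assms(2) RDirProd_list_carrier_mem(2)
    by (intro ring_hom_memI) (simp_all add: RDirProd_list_mult_nth RDirProd_list_add_nth RDirProd_list_one_nth)
qed (use assms RDirProd_list_is_ring in blast)+

definition RDirProd_list_single :: "('a, 'b) ring_scheme list \<Rightarrow> nat \<Rightarrow> 'a \<Rightarrow> 'a list" where
  "RDirProd_list_single Rs i a = map (\<lambda>j. if j = i then a else \<zero>\<^bsub>Rs ! j\<^esub>) [0..<length Rs]"

lemma RDirProd_list_single_nth [simp]:
  "j < length Rs \<Longrightarrow> RDirProd_list_single Rs i a ! j = (if j = i then a else \<zero>\<^bsub>Rs ! j\<^esub>)"
  by (simp add: RDirProd_list_single_def)

lemma RDirProd_list_single_carrier:
  assumes "\<And>j. j < length Rs \<Longrightarrow> ring (Rs ! j)" and "i < length Rs" and "a \<in> carrier (Rs ! i)"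
  shows "RDirProd_list_single Rs i a \<in> carrier (RDirProd_list Rs)"
  using assms by (intro RDirProd_list_carrier_memI) (auto simp: RDirProd_list_single_def ring.ring_simprules(2))

lemma RDirProd_list_single_one_mult:
  assumes rings: "\<And>j. j < length Rs \<Longrightarrow> ring (Rs ! j)" and i: "i < length Rs"
    and y: "y \<in> carrier (RDirProd_list Rs)"
  shows "RDirProd_list_single Rs i \<one>\<^bsub>Rs ! i\<^esub> \<otimes>\<^bsub>RDirProd_list Rs\<^esub> y = RDirProd_list_single Rs i (y ! i)"
    (is "?e \<otimes>\<^bsub>?P\<^esub> y = _")
proof -
  interpret P: ring ?P using RDirProd_list_is_ring rings by blast
  have e: "?e \<in> carrier ?P"
    using rings i by (simp add: RDirProd_list_single_carrier ring.ring_simprules(6))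
  show ?thesis
  proof (rule nth_equalityI)
    show "length (?e \<otimes>\<^bsub>?P\<^esub> y) = length (RDirProd_list_single Rs i (y ! i))"
      using RDirProd_list_carrier_mem(1)[OF P.m_closed[OF e y]] by (simp add: RDirProd_list_single_def)
    fix j assume "j < length (?e \<otimes>\<^bsub>?P\<^esub> y)"
    then have j: "j < length Rs"
      using RDirProd_list_carrier_mem(1)[OF P.m_closed[OF e y]] by simp
    show "(?e \<otimes>\<^bsub>?P\<^esub> y) ! j = RDirProd_list_single Rs i (y ! i) ! j"
      using RDirProd_list_mult_nth[OF e y j] RDirProd_list_carrier_mem(2)[OF y j] rings[OF j] j
      by (cases "j = i") (simp_all add: ring.ring_simprules)
  qed
qed

lemma RDirProd_list_nth_surj:
  assumes "\<And>j. j < length Rs \<Longrightarrow> ring (Rs ! j)" and "i < length Rs"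
  shows "(\<lambda>xs. xs ! i) ` carrier (RDirProd_list Rs) = carrier (Rs ! i)"
proof
  show "(\<lambda>xs. xs ! i) ` carrier (RDirProd_list Rs) \<subseteq> carrier (Rs ! i)"
    using RDirProd_list_carrier_mem(2)[OF _ assms(2)] by blast
  show "carrier (Rs ! i) \<subseteq> (\<lambda>xs. xs ! i) ` carrier (RDirProd_list Rs)"
  proof
    fix a assume "a \<in> carrier (Rs ! i)"
    then have "RDirProd_list_single Rs i a \<in> carrier (RDirProd_list Rs)"
      using assms by (simp add: RDirProd_list_single_carrier)
    then show "a \<in> (\<lambda>xs. xs ! i) ` carrier (RDirProd_list Rs)"
      using assms(2) by (metis RDirProd_list_single_nth image_eqI)
  qed
qed

lemma RDirProd_list_ideal_memI:
  assumes rings: "\<And>j. j < length Rs \<Longrightarrow> ring (Rs ! j)"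
    and J: "ideal J (RDirProd_list Rs)" and x: "x \<in> carrier (RDirProd_list Rs)"
    and components: "\<And>i. i < length Rs \<Longrightarrow> x ! i \<in> (\<lambda>y. y ! i) ` J"
  shows "x \<in> J"
proof -
  let ?P = "RDirProd_list Rs" and ?n = "length Rs"
  interpret P: ring ?P using RDirProd_list_is_ring rings by blast
  interpret J: ideal J ?P by fact
  have x_nth: "x ! i \<in> carrier (Rs ! i)" if "i < ?n" for i
    using RDirProd_list_carrier_mem(2)[OF x that] .
  have single_in: "RDirProd_list_single Rs i (x ! i) \<in> J" if i: "i < ?n" for i
  proof -
    obtain y where y: "y \<in> J" "y ! i = x ! i" using components[OF i] by auto
    have "RDirProd_list_single Rs i \<one>\<^bsub>Rs ! i\<^esub> \<in> carrier ?P"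
      using rings i by (simp add: RDirProd_list_single_carrier ring.ring_simprules(6))
    then have "RDirProd_list_single Rs i \<one>\<^bsub>Rs ! i\<^esub> \<otimes>\<^bsub>?P\<^esub> y \<in> J"
      using J.I_l_closed[OF y(1)] by blast
    then show ?thesis
      using RDirProd_list_single_one_mult[OF rings i J.Icarr[OF y(1)]] y(2) by simp
  qed
  define prefix where "prefix k = map (\<lambda>i. if i < k then x ! i else \<zero>\<^bsub>Rs ! i\<^esub>) [0..<?n]" for k
  have "prefix k \<in> J" if "k \<le> ?n" for k
    using that
  proof (induction k)
    case 0
    have "prefix 0 = \<zero>\<^bsub>?P\<^esub>"
      using RDirProd_list_carrier_mem(1)[OF P.zero_closed]
      by (intro nth_equalityI) (simp_all add: prefix_def RDirProd_list_zero_nth)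
    then show ?case by simp
  next
    case (Suc k)
    have prefix_carrier: "prefix k \<in> carrier ?P"
      using x_nth rings
      by (intro RDirProd_list_carrier_memI) (simp_all add: prefix_def ring.ring_simprules(2))
    have single_carrier: "RDirProd_list_single Rs k (x ! k) \<in> carrier ?P"
      using Suc.prems x_nth rings by (simp add: RDirProd_list_single_carrier)
    note carrier = prefix_carrier single_carrier
    have "prefix (Suc k) = prefix k \<oplus>\<^bsub>?P\<^esub> RDirProd_list_single Rs k (x ! k)"
    proof (rule nth_equalityI)
      show "length (prefix (Suc k)) = length (prefix k \<oplus>\<^bsub>?P\<^esub> RDirProd_list_single Rs k (x ! k))"
        using RDirProd_list_carrier_mem(1)[OF P.a_closed[OF carrier]] by (simp add: prefix_def)
      fix i assume "i < length (prefix (Suc k))"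
      then have i: "i < ?n" by (simp add: prefix_def)
      show "prefix (Suc k) ! i = (prefix k \<oplus>\<^bsub>?P\<^esub> RDirProd_list_single Rs k (x ! k)) ! i"
        unfolding RDirProd_list_add_nth[OF carrier i]
        using i x_nth[OF i] rings[OF i] by (auto simp: prefix_def ring.ring_simprules)
    qed
    then show ?case
      using Suc single_in J.a_closed by simp
  qed
  moreover have "prefix ?n = x"
    using RDirProd_list_carrier_mem(1)[OF x] by (intro nth_equalityI) (simp_all add: prefix_def)
  ultimately show ?thesis by (metis order_refl)
qed

lemma RDirProd_list_ideal_subsetI:
  assumes rings: "\<And>j. j < length Rs \<Longrightarrow> ring (Rs ! j)"
    and I: "ideal I (RDirProd_list Rs)" and J: "ideal J (RDirProd_list Rs)"
    and components: "\<And>i. i < length Rs \<Longrightarrow> (\<lambda>y. y ! i) ` I \<subseteq> (\<lambda>y. y ! i) ` J"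
  shows "I \<subseteq> J"
proof
  fix x assume x: "x \<in> I"
  show "x \<in> J"
    by (rule RDirProd_list_ideal_memI[OF rings J ideal.Icarr[OF I x]]) (use components x in \<open>auto simp: image_subset_iff\<close>)
qed

lemma avoidance_ring_RDirProd_list:
  assumes rings: "\<And>j. j < length Rs \<Longrightarrow> ring (Rs ! j)"
    and av: "\<And>i. i < length Rs \<Longrightarrow> avoidance_ring (Rs ! i)"
  shows "avoidance_ring (RDirProd_list Rs)"
  unfolding avoidance_ring_def has_avoidance_def
proof (intro allI impI, elim conjE)
  let ?P = "RDirProd_list Rs" and ?n = "length Rs"
  define pr where "pr i J = (\<lambda>y. y ! i) ` J" for i and J :: "'a list set"
  have pr_ideal: "ideal (pr i J) (Rs ! i)" if "i < ?n" "ideal J ?P" for i J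
    unfolding pr_def
    by (rule ring_hom_ring.ideal_image_of_surj[OF RDirProd_list_nth_ring_hom_ring[OF rings that(1)]
          RDirProd_list_nth_surj[OF rings that(1)] that(2)])
  fix I S assume I: "ideal I ?P" and S: "finite S" "\<forall>J\<in>S. ideal J ?P" "I \<subseteq> \<Union>S"
  show "\<exists>J\<in>S. I \<subseteq> J"
  proof (rule ccontr)
    assume not_subset: "\<not> (\<exists>J\<in>S. I \<subseteq> J)"
    have "\<forall>J\<in>S. \<exists>i. i < ?n \<and> \<not> pr i I \<subseteq> pr i J"
    proof
      fix J assume J: "J \<in> S"
      show "\<exists>i. i < ?n \<and> \<not> pr i I \<subseteq> pr i J"
      proof (rule ccontr)
        assume "\<nexists>i. i < ?n \<and> \<not> pr i I \<subseteq> pr i J"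
        then have "I \<subseteq> J"
          by (intro RDirProd_list_ideal_subsetI[OF rings I bspec[OF S(2) J]]) (auto simp: pr_def)
        with not_subset J show False by blast
      qed
    qed
    then obtain ix where ix: "\<forall>J\<in>S. ix J < ?n \<and> \<not> pr (ix J) I \<subseteq> pr (ix J) J"
      by (rule bchoice[THEN exE])
    have "\<forall>i\<in>{..<?n}. \<exists>a. a \<in> pr i I \<and> (\<forall>J\<in>S. ix J = i \<longrightarrow> a \<notin> pr i J)"
    proof (intro ballI, rule ccontr)
      fix i assume "i \<in> {..<?n}"
      then have i: "i < ?n" by simp
      assume "\<nexists>a. a \<in> pr i I \<and> (\<forall>J\<in>S. ix J = i \<longrightarrow> a \<notin> pr i J)"
      then have "pr i I \<subseteq> \<Union>(pr i ` {J \<in> S. ix J = i})" by blast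
      moreover have "has_avoidance (Rs ! i) (pr i I)"
        using av[OF i] pr_ideal[OF i I] unfolding avoidance_ring_def by blast
      moreover have "finite (pr i ` {J \<in> S. ix J = i})"
        using S(1) by simp
      moreover have "\<forall>K \<in> pr i ` {J \<in> S. ix J = i}. ideal K (Rs ! i)"
        using S(2) pr_ideal[OF i] by blast
      ultimately obtain J where "J \<in> S" "ix J = i" "pr i I \<subseteq> pr i J"
        unfolding has_avoidance_def by blast
      then show False using ix by blast
    qed
    then obtain f where f: "\<forall>i\<in>{..<?n}. f i \<in> pr i I \<and> (\<forall>J\<in>S. ix J = i \<longrightarrow> f i \<notin> pr i J)"
      by (rule bchoice[THEN exE])
    define w where "w = map f [0..<?n]"
    have w_nth: "w ! i = f i" if "i < ?n" for i
      using that by (simp add: w_def)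
    have "f i \<in> carrier (Rs ! i)" if i: "i < ?n" for i
    proof -
      obtain y where "y \<in> I" "f i = y ! i"
        using f i unfolding pr_def by blast
      then show ?thesis
        using RDirProd_list_carrier_mem(2)[OF ideal.Icarr[OF I] i] by simp
    qed
    then have w: "w \<in> carrier ?P"
      by (intro RDirProd_list_carrier_memI) (simp_all add: w_def)
    have "w \<in> I"
    proof (rule RDirProd_list_ideal_memI[OF rings I w])
      fix i assume "i < ?n"
      then show "w ! i \<in> (\<lambda>y. y ! i) ` I"
        using f w_nth unfolding pr_def by simp
    qed
    then obtain J where J: "J \<in> S" "w \<in> J" using S(3) by blast
    then have "w ! ix J \<in> pr (ix J) J" unfolding pr_def by blast
    moreover have "ix J < ?n" "f (ix J) \<notin> pr (ix J) J"
      using ix f J(1) by blast+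
    ultimately show False using w_nth by simp
  qed
qed

theorem theorem3p7:
  fixes Rs :: "('a, 'b) ring_scheme list"
  assumes "Rs \<noteq> []"
    and "\<forall>R\<in>set Rs. cring R \<and> \<one>\<^bsub>R\<^esub> \<noteq> \<zero>\<^bsub>R\<^esub>"
  shows "avoidance_ring (RDirProd_list Rs) \<longleftrightarrow> (\<forall>R\<in>set Rs. avoidance_ring R)"
proof -
  have rings: "\<And>i. i < length Rs \<Longrightarrow> ring (Rs ! i)"
    using assms(2) nth_mem cring.axioms(1) by blast
  have "avoidance_ring (Rs ! i)" if "avoidance_ring (RDirProd_list Rs)" "i < length Rs" for i
    using ring_hom_ring.avoidance_ring_image_of_surj[OF RDirProd_list_nth_ring_hom_ring[OF rings that(2)]
        RDirProd_list_nth_surj[OF rings that(2)] that(1)] .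
  then show ?thesis
    using avoidance_ring_RDirProd_list[OF rings] by (metis in_set_conv_nth)
qed

end
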